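(* Let $\mathcal C\subseteq 2^{[n]}$ and let $n$ be a $k$-piercing of $\mathcal C$ with associated interval $[\sigma,\tau]$. Then $$\mathrm{CF}(J_\mathcal C)=\mathrm{CF}(J_{\mathcal C\setminus n})\sqcup\{x_nx_i: i\in[n-1]\setminus\tau\}\sqcup\{x_n(1-x_j): j\in\sigma\}.$$
   Context: A code is a set $\mathcal C\subseteq 2^{[n]}$, $[n]=\{1,\dots,n\}$. Standing conventions: $\emptyset\in\mathcal C$; every neuron lies in some codeword; no two distinct neurons lie in exactly the same codewords. $\mathcal C\setminus n$ is the code on $[n-1]$ obtained by removing $n$ from every codeword. For $\sigma\subseteq\tau$, $[\sigma,\tau]=\{\gamma:\sigma\subseteq\gamma\subseteq\tau\}$, of rank $|\tau\setminus\sigma|$. The neuron $n$ is a $k$-piercing of $\mathcal C$ with associated interval $[\sigma,\tau]$ if $\sigma\subseteq\tau\subseteq[n-1]$, $[\sigma,\tau]$ has rank $k$, $[\sigma,\tau]\subseteq\mathcal C\setminus n$, and $\mathcal C=(\mathcal C\setminus n)\cup[\sigma\cup\{n\},\tau\cup\{n\}]$. A pseudo-monomial is $\prod_{i\in\alpha}x_i\prod_{j\in\beta}(1-x_j)$ with $\alpha\cap\beta=\emptyset$, ordered by divisibility. For a code $\mathcal D$ on $[m]$, $J_\mathcal D=\langle\rho_\gamma:\gamma\notin\mathcal D\rangle\subseteq\mathbb F_2[x_1,\dots,x_m]$ with $\rho_\gamma=\prod_{i\in\gamma}x_i\prod_{j\in[m]\setminus\gamma}(1-x_j)$, and $\mathrm{CF}(J_\mathcal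 D)$ is the set of minimal pseudo-monomials in $J_\mathcal D$. *)

theory Defs
  imports "HOL-Library.Poly_Mapping" "HOL-Library.Z2"
begin

text \<open>Polynomials over F2 in variables x_i (i a natural number) are represented by
  poly_mappings from monomials (nat =>0 nat, exponent vectors) to coefficients in
  the two-element field bit. F2[x_1,...,x_m] is the subring of polynomials
  whose variables lie in {1..m}.\<close>

type_synonym poly2 = "(nat \<Rightarrow>\<^sub>0 nat) \<Rightarrow>\<^sub>0 bit"

definition X :: "nat \<Rightarrow> poly2" where
  "X i = Poly_Mapping.single (Poly_Mapping.single i 1) 1"

definition vars :: "poly2 \<Rightarrow> nat set" where
  "vars p = \<Union> (Poly_Mapping.keys ` Poly_Mapping.keys p)"

definition in_ring :: "nat \<Rightarrow> poly2 \<Rightarrow> bool" where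
  "in_ring m p \<longleftrightarrow> vars p \<subseteq> {1..m}"

definition pm :: "nat set \<Rightarrow> nat set \<Rightarrow> poly2" where
  "pm \<alpha> \<beta> = (\<Prod>i\<in>\<alpha>. X i) * (\<Prod>j\<in>\<beta>. (1 - X j))"

definition is_pseudo_monomial :: "nat \<Rightarrow> poly2 \<Rightarrow> bool" where
  "is_pseudo_monomial m f \<longleftrightarrow>
     (\<exists>\<alpha> \<beta>. \<alpha> \<subseteq> {1..m} \<and> \<beta> \<subseteq> {1..m} \<and> \<alpha> \<inter> \<beta> = {} \<and> f = pm \<alpha> \<beta>)"

definition dvd_in :: "nat \<Rightarrow> poly2 \<Rightarrow> poly2 \<Rightarrow> bool" where
  "dvd_in m g f \<longleftrightarrow> (\<exists>q. in_ring m q \<and> f = g * q)"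

definition rho :: "nat \<Rightarrow> nat set \<Rightarrow> poly2" where
  "rho m \<gamma> = pm \<gamma> ({1..m} - \<gamma>)"

definition ideal_gen :: "nat \<Rightarrow> poly2 set \<Rightarrow> poly2 set" where
  "ideal_gen m G = {(\<Sum>g\<in>G. q g * g) | q. \<forall>g\<in>G. in_ring m (q g)}"

definition J :: "nat \<Rightarrow> nat set set \<Rightarrow> poly2 set" where
  "J m D = ideal_gen m (rho m ` {\<gamma>. \<gamma> \<subseteq> {1..m} \<and> \<gamma> \<notin> D})"

definition CF :: "nat \<Rightarrow> nat set set \<Rightarrow> poly2 set" where
  "CF m D = {f. is_pseudo_monomial m f \<and> f \<in> J m D \<and>
     \<not> (\<exists>g. is_pseudo_monomial m g \<and> g \<in> J m D \<and> dvd_in m g f \<and> g \<noteq> f)}"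

definition is_code :: "nat \<Rightarrow> nat set set \<Rightarrow> bool" where
  "is_code n C \<longleftrightarrow> C \<subseteq> Pow {1..n} \<and> {} \<in> C \<and>
     (\<forall>i\<in>{1..n}. \<exists>c\<in>C. i \<in> c) \<and>
     (\<forall>i\<in>{1..n}. \<forall>j\<in>{1..n}. i \<noteq> j \<longrightarrow> {c\<in>C. i \<in> c} \<noteq> {c\<in>C. j \<in> c})"

definition del_neuron :: "nat set set \<Rightarrow> nat \<Rightarrow> nat set set" where
  "del_neuron C n = (\<lambda>c. c - {n}) ` C"

definition interval :: "nat set \<Rightarrow> nat set \<Rightarrow> nat set set" where
  "interval \<sigma> \<tau> = {\<gamma>. \<sigma> \<subseteq> \<gamma> \<and> \<gamma> \<subseteq> \<tau>}"

definition is_piercing :: "nat set set \<Rightarrow> nat \<Rightarrow> nat \<Rightarrow> nat set \<Rightarrow> nat set \<Rightarrow> bool" where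
  "is_piercing C n k \<sigma> \<tau> \<longleftrightarrow>
     \<sigma> \<subseteq> \<tau> \<and> \<tau> \<subseteq> {1..n-1} \<and> card (\<tau> - \<sigma>) = k \<and>
     interval \<sigma> \<tau> \<subseteq> del_neuron C n \<and>
     C = del_neuron C n \<union> (\<lambda>\<gamma>. insert n \<gamma>) ` interval \<sigma> \<tau>"

end

theory Submission
  imports Defs
begin

(* A pseudo-monomial x_a \<Prod>_{j \<in> b} (1 - x_j) is the sum of the \<rho>_g over the 0/1 points g
   at which it equals 1, i.e. over the g containing a and avoiding b. Evaluating at the codewords
   of D therefore shows that it lies in J_D iff it vanishes on every codeword of D, so CF(J_D)
   consists of the pseudo-monomials of the minimal pairs (a, b) with that property. For the
   piercing C = (C \ n) \<union> {g \<union> {n} : g \<in> [\<sigma>, \<tau>]}, a pair avoiding n vanishes on C iff it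
   vanishes on C \ n; a pair with n \<in> b is never minimal, since n can be dropped from b; and a
   pair with n \<in> a vanishes on C iff a contains some i outside \<tau> or b meets \<sigma>, so minimality
   forces (a, b) = ({n, i}, {}) or ({n}, {j}). *)

section \<open>Evaluation at 0/1 points\<close>

(* The value of p at the 0/1 point with support c: a monomial contributes iff its variables lie in c. *)
definition eval_ind :: "nat set \<Rightarrow> poly2 \<Rightarrow> bit" where
  "eval_ind c p =
     (\<Sum>k\<in>Poly_Mapping.keys p. if Poly_Mapping.keys k \<subseteq> c then Poly_Mapping.lookup p k else 0)"

lemma eval_ind_zero [simp]: "eval_ind c 0 = 0"
  by (simp add: eval_ind_def)

lemma eval_ind_one [simp]: "eval_ind c 1 = 1"
  by (simp add: eval_ind_def lookup_one)

lemma eval_ind_single: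
  "eval_ind c (Poly_Mapping.single k a) = (if Poly_Mapping.keys k \<subseteq> c then a else 0)"
  by (cases "a = 0") (auto simp: eval_ind_def)

lemma eval_ind_add: "eval_ind c (p + q) = eval_ind c p + eval_ind c q"
  unfolding eval_ind_def
  by (rule setsum_keys_plus_distrib[where f = "\<lambda>k v. if Poly_Mapping.keys k \<subseteq> c then v else 0"])
    auto

lemma eval_ind_diff: "eval_ind c (p - q) = eval_ind c p - eval_ind c q"
  by (metis eval_ind_add diff_add_cancel eq_diff_eq)

lemma eval_ind_sum: "eval_ind c (sum f A) = (\<Sum>x\<in>A. eval_ind c (f x))"
  by (induction A rule: infinite_finite_induct) (auto simp: eval_ind_add)

lemma sum_single_lookup:
  "(\<Sum>k\<in>Poly_Mapping.keys p. Poly_Mapping.single k (Poly_Mapping.lookup p k)) = p"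
proof (rule poly_mapping_eqI)
  fix k'
  have "(\<Sum>k\<in>Poly_Mapping.keys p. Poly_Mapping.lookup (Poly_Mapping.single k (Poly_Mapping.lookup p k)) k')
      = (\<Sum>k\<in>Poly_Mapping.keys p. if k = k' then Poly_Mapping.lookup p k else 0)"
    by (rule sum.cong) (auto simp: lookup_single when_def)
  also have "\<dots> = Poly_Mapping.lookup p k'"
    by (auto simp: in_keys_iff)
  finally show "Poly_Mapping.lookup (\<Sum>k\<in>Poly_Mapping.keys p. Poly_Mapping.single k (Poly_Mapping.lookup p k)) k'
      = Poly_Mapping.lookup p k'"
    by (simp add: lookup_sum)
qed

lemma keys_add_nat:
  "Poly_Mapping.keys ((k :: 'a \<Rightarrow>\<^sub>0 nat) + l) = Poly_Mapping.keys k \<union> Poly_Mapping.keys l"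
  by (auto simp: in_keys_iff lookup_add)

lemma eval_ind_mult: "eval_ind c (p * q) = eval_ind c p * eval_ind c q"
proof -
  let ?K = "Poly_Mapping.keys p" and ?L = "Poly_Mapping.keys q"
  let ?a = "Poly_Mapping.lookup p" and ?b = "Poly_Mapping.lookup q"
  let ?ev = "\<lambda>k v. if Poly_Mapping.keys k \<subseteq> c then v else 0"
  have "p * q = (\<Sum>k\<in>?K. Poly_Mapping.single k (?a k)) * (\<Sum>l\<in>?L. Poly_Mapping.single l (?b l))"
    by (simp only: sum_single_lookup)
  also have "\<dots> = (\<Sum>k\<in>?K. \<Sum>l\<in>?L. Poly_Mapping.single (k + l) (?a k * ?b l))"
    by (simp add: sum_product mult_single)
  finally have "eval_ind c (p * q)
      = (\<Sum>k\<in>?K. \<Sum>l\<in>?L. eval_ind c (Poly_Mapping.single (k + l) (?a k * ?b l)))"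
    by (simp add: eval_ind_sum)
  also have "\<dots> = (\<Sum>k\<in>?K. \<Sum>l\<in>?L. ?ev k (?a k) * ?ev l (?b l))"
    by (intro sum.cong refl)
      (simp only: eval_ind_single keys_add_nat Un_subset_iff mult_zero_left mult_zero_right
        if_if_eq_conj split: if_split; blast)
  also have "\<dots> = eval_ind c p * eval_ind c q"
    by (simp only: eval_ind_def sum_product)
  finally show ?thesis .
qed

lemma eval_ind_X: "eval_ind c (X i) = (if i \<in> c then 1 else 0)"
  by (simp add: X_def eval_ind_single)

lemma eval_ind_pm:
  assumes "finite a" "finite b"
  shows "eval_ind c (pm a b) = (if a \<subseteq> c \<and> b \<inter> c = {} then 1 else 0)"
proof -
  have "eval_ind c (\<Prod>i\<in>a. X i) = (if a \<subseteq> c then 1 else 0)"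
    using \<open>finite a\<close> by (induction a rule: finite_induct) (auto simp: eval_ind_mult eval_ind_X)
  moreover have "eval_ind c (\<Prod>j\<in>b. 1 - X j) = (if b \<inter> c = {} then 1 else 0)"
    using \<open>finite b\<close>
    by (induction b rule: finite_induct) (auto simp: eval_ind_mult eval_ind_diff eval_ind_X)
  ultimately show ?thesis
    by (simp add: pm_def eval_ind_mult)
qed

lemma eval_ind_pm_eq_1_iff:
  "finite a \<Longrightarrow> finite b \<Longrightarrow> eval_ind c (pm a b) = 1 \<longleftrightarrow> a \<subseteq> c \<and> b \<inter> c = {}"
  by (simp add: eval_ind_pm)

lemma pm_dvd_imp_subset:
  assumes "finite a" "finite b" "a \<inter> b = {}" "finite a'" "finite b'"
    and "pm a b = pm a' b' * q"
  shows "a' \<subseteq> a \<and> b' \<subseteq> b"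
proof -
  have value_1: "eval_ind c (pm a' b') = 1" if "eval_ind c (pm a b) = 1" for c
    using that assms(6) by (simp add: eval_ind_mult)
  have "eval_ind a (pm a b) = 1" "eval_ind (- b) (pm a b) = 1"
    using assms(1-3) by (auto simp: eval_ind_pm_eq_1_iff)
  from this[THEN value_1] show ?thesis
    using assms(4,5) by (auto simp: eval_ind_pm_eq_1_iff)
qed

lemma pm_inj:
  assumes "finite a" "finite b" "a \<inter> b = {}" "finite a'" "finite b'" "a' \<inter> b' = {}"
    and "pm a b = pm a' b'"
  shows "a = a' \<and> b = b'"
  using pm_dvd_imp_subset[of a b a' b' 1] pm_dvd_imp_subset[of a' b' a b 1] assms by auto

lemma vars_diff: "vars (p - q) \<subseteq> vars p \<union> vars q"
  unfolding vars_def using keys_diff[of p q] by blast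

lemma vars_mult: "vars (p * q) \<subseteq> vars p \<union> vars q"
proof
  fix x assume "x \<in> vars (p * q)"
  then obtain k where k: "k \<in> Poly_Mapping.keys (p * q)" "x \<in> Poly_Mapping.keys k"
    unfolding vars_def by blast
  then obtain k1 k2 where "k = k1 + k2" "k1 \<in> Poly_Mapping.keys p" "k2 \<in> Poly_Mapping.keys q"
    using keys_mult[of p q] by blast
  with k show "x \<in> vars p \<union> vars q"
    unfolding vars_def by (auto simp: keys_add_nat)
qed

lemma in_ring_zero: "in_ring m 0"
  by (simp add: in_ring_def vars_def)

lemma in_ring_one: "in_ring m 1"
  by (simp add: in_ring_def vars_def)

lemma in_ring_X: "i \<in> {1..m} \<Longrightarrow> in_ring m (X i)"
  by (simp add: in_ring_def vars_def X_def)

lemma in_ring_mult: "in_ring m p \<Longrightarrow> in_ring m q \<Longrightarrow> in_ring m (p * q)"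
  unfolding in_ring_def using vars_mult by blast

lemma in_ring_diff: "in_ring m p \<Longrightarrow> in_ring m q \<Longrightarrow> in_ring m (p - q)"
  unfolding in_ring_def using vars_diff by blast

lemma in_ring_prod: "(\<And>x. x \<in> A \<Longrightarrow> in_ring m (f x)) \<Longrightarrow> in_ring m (prod f A)"
  by (induction A rule: infinite_finite_induct) (auto simp: in_ring_one in_ring_mult)

lemma in_ring_pm: "a \<subseteq> {1..m} \<Longrightarrow> b \<subseteq> {1..m} \<Longrightarrow> in_ring m (pm a b)"
  unfolding pm_def by (intro in_ring_mult in_ring_prod in_ring_diff in_ring_one in_ring_X) auto

lemma pm_split:
  assumes "finite a" "finite b" "a' \<subseteq> a" "b' \<subseteq> b"
  shows "pm a b = pm a' b' * pm (a - a') (b - b')"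
  using assms unfolding pm_def by (simp add: prod.subset_diff ac_simps)

lemma dvd_in_pm_iff:
  assumes "a \<subseteq> {1..m}" "b \<subseteq> {1..m}" "a \<inter> b = {}" "a' \<subseteq> {1..m}" "b' \<subseteq> {1..m}"
  shows "dvd_in m (pm a' b') (pm a b) \<longleftrightarrow> a' \<subseteq> a \<and> b' \<subseteq> b"
proof
  have fin: "finite a" "finite b" "finite a'" "finite b'"
    using assms(1,2,4,5) by (meson finite_atLeastAtMost rev_finite_subset)+
  show "dvd_in m (pm a' b') (pm a b) \<Longrightarrow> a' \<subseteq> a \<and> b' \<subseteq> b"
    unfolding dvd_in_def using pm_dvd_imp_subset[OF fin(1,2) assms(3) fin(3,4)] by blast
  assume "a' \<subseteq> a \<and> b' \<subseteq> b"
  then have "pm a b = pm a' b' * pm (a - a') (b - b')"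
    using pm_split[OF fin(1,2)] by blast
  moreover have "in_ring m (pm (a - a') (b - b'))"
    using assms(1,2) by (intro in_ring_pm) auto
  ultimately show "dvd_in m (pm a' b') (pm a b)"
    unfolding dvd_in_def by blast
qed

section \<open>Pseudo-monomials in the neural ideal\<close>

lemma eval_ind_rho:
  assumes "g \<subseteq> {1..m}" "c \<subseteq> {1..m}"
  shows "eval_ind c (rho m g) = (if g = c then 1 else 0)"
proof -
  have "finite g"
    using assms(1) by (rule rev_finite_subset[OF finite_atLeastAtMost])
  moreover have "g \<subseteq> c \<and> ({1..m} - g) \<inter> c = {} \<longleftrightarrow> g = c"
    using assms by blast
  ultimately show ?thesis
    by (simp add: rho_def eval_ind_pm)
qed

lemma inj_on_rho: "inj_on (rho m) (Pow {1..m})"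
proof (rule inj_onI)
  fix g g' assume g: "g \<in> Pow {1..m}" "g' \<in> Pow {1..m}" and "rho m g = rho m g'"
  then have "eval_ind g (rho m g) = eval_ind g (rho m g')"
    by simp
  with g show "g = g'"
    by (simp add: eval_ind_rho split: if_splits)
qed

lemma eval_ind_J_eq_0:
  assumes "D \<subseteq> Pow {1..m}" "p \<in> J m D" "c \<in> D"
  shows "eval_ind c p = 0"
proof -
  let ?G = "rho m ` {g. g \<subseteq> {1..m} \<and> g \<notin> D}"
  obtain q where "p = (\<Sum>g\<in>?G. q g * g)"
    using assms(2) unfolding J_def ideal_gen_def by blast
  moreover have "eval_ind c (q g * g) = 0" if "g \<in> ?G" for g
  proof -
    obtain h where "g = rho m h" "h \<subseteq> {1..m}" "h \<noteq> c"
      using \<open>g \<in> ?G\<close> assms(3) by blast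
    moreover have "c \<subseteq> {1..m}"
      using assms(1,3) by blast
    ultimately show ?thesis
      by (simp add: eval_ind_mult eval_ind_rho)
  qed
  ultimately show ?thesis
    by (simp add: eval_ind_sum)
qed

lemma sum_rho_in_J:
  assumes "S \<subseteq> {g. g \<subseteq> {1..m} \<and> g \<notin> D}"
  shows "(\<Sum>g\<in>S. rho m g) \<in> J m D"
proof -
  let ?G = "rho m ` {g. g \<subseteq> {1..m} \<and> g \<notin> D}"
  define q where "q g = (if g \<in> rho m ` S then 1 else 0 :: poly2)" for g
  have "(\<Sum>g\<in>?G. q g * g) = (\<Sum>g\<in>?G. if g \<in> rho m ` S then g else 0)"
    by (rule sum.cong) (auto simp: q_def)
  also have "\<dots> = (\<Sum>g\<in>?G \<inter> rho m ` S. g)"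
    by (simp add: sum.inter_restrict)
  also have "?G \<inter> rho m ` S = rho m ` S"
    using assms by blast
  also have "(\<Sum>g\<in>rho m ` S. g) = (\<Sum>g\<in>S. rho m g)"
    using assms by (intro sum.reindex_cong[OF inj_on_subset[OF inj_on_rho]]) auto
  finally have "(\<Sum>g\<in>S. rho m g) = (\<Sum>g\<in>?G. q g * g)" ..
  moreover have "\<forall>g\<in>?G. in_ring m (q g)"
    by (simp add: q_def in_ring_zero in_ring_one)
  ultimately show ?thesis
    unfolding J_def ideal_gen_def by blast
qed

lemma pm_eq_sum_extensions:
  assumes "finite a" "finite b" "finite F" "a \<inter> F = {}" "b \<inter> F = {}"
  shows "pm a b = (\<Sum>T\<in>Pow F. pm (a \<union> T) (b \<union> (F - T)))"
proof -
  have "(\<Sum>T\<in>Pow F. (\<Prod>x\<in>T. X x) * (\<Prod>x\<in>F - T. 1 - X x)) = (\<Prod>x\<in>F. X x + (1 - X x))"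
    using prod_add[OF \<open>finite F\<close>, of X "\<lambda>x. 1 - X x"] by simp
  then have "pm a b = pm a b * (\<Sum>T\<in>Pow F. (\<Prod>x\<in>T. X x) * (\<Prod>x\<in>F - T. 1 - X x))"
    by simp
  also have "\<dots> = (\<Sum>T\<in>Pow F. pm a b * ((\<Prod>x\<in>T. X x) * (\<Prod>x\<in>F - T. 1 - X x)))"
    by (rule sum_distrib_left)
  also have "\<dots> = (\<Sum>T\<in>Pow F. pm (a \<union> T) (b \<union> (F - T)))"
  proof (rule sum.cong[OF refl])
    fix T assume "T \<in> Pow F"
    then have "finite T" "a \<inter> T = {}" "b \<inter> (F - T) = {}"
      using assms finite_subset by auto
    then show "pm a b * ((\<Prod>x\<in>T. X x) * (\<Prod>x\<in>F - T. 1 - X x)) = pm (a \<union> T) (b \<union> (F - T))"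
      unfolding pm_def using assms by (simp add: prod.union_disjoint ac_simps)
  qed
  finally show ?thesis .
qed

lemma pm_eq_sum_rho:
  assumes "a \<subseteq> {1..m}" "b \<subseteq> {1..m}" "a \<inter> b = {}"
  shows "pm a b = (\<Sum>g\<in>{g. g \<subseteq> {1..m} \<and> a \<subseteq> g \<and> b \<inter> g = {}}. rho m g)"
proof -
  define F where "F = {1..m} - a - b"
  have "pm a b = (\<Sum>T\<in>Pow F. pm (a \<union> T) (b \<union> (F - T)))"
    using assms by (intro pm_eq_sum_extensions) (auto simp: F_def finite_subset)
  also have "\<dots> = (\<Sum>T\<in>Pow F. rho m (a \<union> T))"
  proof (rule sum.cong[OF refl])
    fix T assume "T \<in> Pow F"
    then have "b \<union> (F - T) = {1..m} - (a \<union> T)"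
      using assms by (auto simp: F_def)
    then show "pm (a \<union> T) (b \<union> (F - T)) = rho m (a \<union> T)"
      by (simp add: rho_def)
  qed
  also have "\<dots> = (\<Sum>g\<in>(\<lambda>T. a \<union> T) ` Pow F. rho m g)"
    by (subst sum.reindex) (auto simp: F_def inj_on_def)
  also have "(\<lambda>T. a \<union> T) ` Pow F = {g. g \<subseteq> {1..m} \<and> a \<subseteq> g \<and> b \<inter> g = {}}"
  proof (intro equalityI subsetI)
    fix g assume "g \<in> {g. g \<subseteq> {1..m} \<and> a \<subseteq> g \<and> b \<inter> g = {}}"
    then have "g = a \<union> (g - a)" "g - a \<in> Pow F"
      by (auto simp: F_def)
    then show "g \<in> (\<lambda>T. a \<union> T) ` Pow F"
      by blast
  qed (use assms in \<open>auto simp: F_def\<close>)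
  finally show ?thesis .
qed

(* pm a b is zero at every codeword of D. *)
definition vanishes_on :: "nat set set \<Rightarrow> nat set \<Rightarrow> nat set \<Rightarrow> bool" where
  "vanishes_on D a b \<longleftrightarrow> (\<forall>c\<in>D. \<not> (a \<subseteq> c \<and> b \<inter> c = {}))"

lemma vanishes_on_mono:
  assumes "vanishes_on D a' b'" "a' \<subseteq> a" "b' \<subseteq> b"
  shows "vanishes_on D a b"
  unfolding vanishes_on_def
proof (intro ballI notI)
  fix c assume "c \<in> D" "a \<subseteq> c \<and> b \<inter> c = {}"
  with assms(2,3) have "a' \<subseteq> c \<and> b' \<inter> c = {}"
    by blast
  with \<open>c \<in> D\<close> assms(1) show False
    unfolding vanishes_on_def by blast
qed

lemma pm_in_J_iff:
  assumes "D \<subseteq> Pow {1..m}" "a \<subseteq> {1..m}" "b \<subseteq> {1..m}" "a \<inter> b = {}"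
  shows "pm a b \<in> J m D \<longleftrightarrow> vanishes_on D a b"
proof
  have "finite a" "finite b"
    using assms(2,3) by (meson finite_atLeastAtMost rev_finite_subset)+
  assume "pm a b \<in> J m D"
  show "vanishes_on D a b"
    unfolding vanishes_on_def
  proof (intro ballI notI)
    fix c assume "c \<in> D" "a \<subseteq> c \<and> b \<inter> c = {}"
    then have "eval_ind c (pm a b) = 1"
      using \<open>finite a\<close> \<open>finite b\<close> by (simp add: eval_ind_pm Int_commute)
    moreover have "eval_ind c (pm a b) = 0"
      using eval_ind_J_eq_0[OF assms(1) \<open>pm a b \<in> J m D\<close> \<open>c \<in> D\<close>] .
    ultimately show False
      by simp
  qed
next
  assume "vanishes_on D a b"
  then have "{g. g \<subseteq> {1..m} \<and> a \<subseteq> g \<and> b \<inter> g = {}} \<subseteq> {g. g \<subseteq> {1..m} \<and> g \<notin> D}"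
    unfolding vanishes_on_def by blast
  then show "pm a b \<in> J m D"
    unfolding pm_eq_sum_rho[OF assms(2-4)] by (rule sum_rho_in_J)
qed

definition minimal_vanishing :: "nat \<Rightarrow> nat set set \<Rightarrow> nat set \<Rightarrow> nat set \<Rightarrow> bool" where
  "minimal_vanishing m D a b \<longleftrightarrow>
     a \<subseteq> {1..m} \<and> b \<subseteq> {1..m} \<and> a \<inter> b = {} \<and> vanishes_on D a b \<and>
     (\<forall>a' b'. a' \<subseteq> a \<longrightarrow> b' \<subseteq> b \<longrightarrow> vanishes_on D a' b' \<longrightarrow> a' = a \<and> b' = b)"

lemma minimal_vanishingI:
  assumes "a \<subseteq> {1..m}" "b \<subseteq> {1..m}" "a \<inter> b = {}" "vanishes_on D a b"
    and "\<And>a' b'. a' \<subseteq> a \<Longrightarrow> b' \<subseteq> b \<Longrightarrow> vanishes_on D a' b' \<Longrightarrow> a' = a \<and> b' = b"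
  shows "minimal_vanishing m D a b"
  using assms unfolding minimal_vanishing_def by blast

lemma CF_imp_minimal_vanishing:
  assumes D: "D \<subseteq> Pow {1..m}" and f: "f \<in> CF m D"
  obtains a b where "f = pm a b" "minimal_vanishing m D a b"
proof -
  obtain a b where ab: "a \<subseteq> {1..m}" "b \<subseteq> {1..m}" "a \<inter> b = {}" and f_eq: "f = pm a b"
    using f unfolding CF_def is_pseudo_monomial_def by blast
  have "minimal_vanishing m D a b"
  proof (rule minimal_vanishingI[OF ab])
    show "vanishes_on D a b"
      using f f_eq pm_in_J_iff[OF D ab] unfolding CF_def by blast
    fix a' b' assume sub: "a' \<subseteq> a" "b' \<subseteq> b" and van: "vanishes_on D a' b'"
    have ab': "a' \<subseteq> {1..m}" "b' \<subseteq> {1..m}" "a' \<inter> b' = {}"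
      using sub ab by auto
    then have "is_pseudo_monomial m (pm a' b')" "pm a' b' \<in> J m D"
      using van pm_in_J_iff[OF D ab'] unfolding is_pseudo_monomial_def by blast+
    moreover have "dvd_in m (pm a' b') f"
      using dvd_in_pm_iff[OF ab ab'(1,2)] sub f_eq by simp
    ultimately have "pm a' b' = pm a b"
      using f f_eq unfolding CF_def by blast
    moreover have "finite a" "finite b" "finite a'" "finite b'"
      using ab ab' by (meson finite_atLeastAtMost rev_finite_subset)+
    ultimately show "a' = a \<and> b' = b"
      using pm_inj ab(3) ab'(3) by blast
  qed
  with f_eq show thesis
    by (rule that)
qed

lemma minimal_vanishing_imp_CF:
  assumes D: "D \<subseteq> Pow {1..m}" and min: "minimal_vanishing m D a b"
  shows "pm a b \<in> CF m D"
proof -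
  have ab: "a \<subseteq> {1..m}" "b \<subseteq> {1..m}" "a \<inter> b = {}"
    using min unfolding minimal_vanishing_def by blast+
  have "g = pm a b" if g_pm: "is_pseudo_monomial m g" and g_J: "g \<in> J m D"
    and g_dvd: "dvd_in m g (pm a b)" for g
  proof -
    obtain a' b' where ab': "a' \<subseteq> {1..m}" "b' \<subseteq> {1..m}" "a' \<inter> b' = {}" and g: "g = pm a' b'"
      using g_pm unfolding is_pseudo_monomial_def by blast
    have "dvd_in m (pm a' b') (pm a b)"
      using g_dvd g by simp
    then have "a' \<subseteq> a" "b' \<subseteq> b"
      using dvd_in_pm_iff[OF ab ab'(1,2)] by blast+
    moreover have "vanishes_on D a' b'"
      using g_J g pm_in_J_iff[OF D ab'] by blast
    ultimately have "a' = a \<and> b' = b"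
      using min unfolding minimal_vanishing_def by blast
    then show "g = pm a b"
      using g by simp
  qed
  moreover have "vanishes_on D a b"
    using min unfolding minimal_vanishing_def by blast
  then have "pm a b \<in> J m D"
    using pm_in_J_iff[OF D ab] by blast
  moreover have "is_pseudo_monomial m (pm a b)"
    using ab unfolding is_pseudo_monomial_def by blast
  ultimately show ?thesis
    unfolding CF_def by blast
qed

lemma CF_iff_minimal_vanishing:
  assumes "D \<subseteq> Pow {1..m}"
  shows "f \<in> CF m D \<longleftrightarrow> (\<exists>a b. f = pm a b \<and> minimal_vanishing m D a b)"
proof
  assume "f \<in> CF m D"
  then show "\<exists>a b. f = pm a b \<and> minimal_vanishing m D a b"
    by (rule CF_imp_minimal_vanishing[OF assms]) blast
next
  assume "\<exists>a b. f = pm a b \<and> minimal_vanishing m D a b"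
  then show "f \<in> CF m D"
    using minimal_vanishing_imp_CF[OF assms] by blast
qed

lemma CF_ne_X_mult:
  assumes "D \<subseteq> Pow {1..m}" "f \<in> CF m D" "n \<notin> {1..m}"
  shows "f \<noteq> X n * p"
proof -
  obtain a b where f_eq: "f = pm a b" and min: "minimal_vanishing m D a b"
    using assms(1,2) CF_iff_minimal_vanishing by blast
  then have ab: "a \<subseteq> {1..m}" "b \<subseteq> {1..m}" "a \<inter> b = {}"
    unfolding minimal_vanishing_def by blast+
  then have "finite a" "finite b"
    by (meson finite_atLeastAtMost rev_finite_subset)+
  then have "eval_ind a f = 1"
    using ab(3) f_eq by (simp add: eval_ind_pm Int_commute)
  moreover have "eval_ind a (X n * p) = 0"
    using ab(1) assms(3) by (auto simp: eval_ind_mult eval_ind_X)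
  ultimately show ?thesis
    by auto
qed

lemma X_mult_X_ne_X_mult_one_minus_X:
  assumes "i \<noteq> n" "j \<noteq> n"
  shows "X n * X i \<noteq> X n * (1 - X j)"
proof
  assume "X n * X i = X n * (1 - X j)"
  then have "eval_ind {n} (X n * X i) = eval_ind {n} (X n * (1 - X j))"
    by (rule arg_cong)
  with assms show False
    by (simp add: eval_ind_mult eval_ind_diff eval_ind_X)
qed

section \<open>Piercings\<close>

lemma del_neuron_subset_Pow: "C \<subseteq> Pow {1..n} \<Longrightarrow> del_neuron C n \<subseteq> Pow {1..n-1}"
  unfolding del_neuron_def by fastforce

lemma piercing_vanishes_on_iff_del_neuron:
  assumes "is_piercing C n k \<sigma> \<tau>" "n \<notin> a"
  shows "vanishes_on C a b \<longleftrightarrow> vanishes_on (del_neuron C n) a b"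
proof -
  have C_eq: "C = del_neuron C n \<union> insert n ` interval \<sigma> \<tau>"
    and interval_sub: "interval \<sigma> \<tau> \<subseteq> del_neuron C n"
    using assms(1) unfolding is_piercing_def by blast+
  show ?thesis
  proof
    show "vanishes_on C a b \<Longrightarrow> vanishes_on (del_neuron C n) a b"
      using C_eq unfolding vanishes_on_def by blast
    assume van: "vanishes_on (del_neuron C n) a b"
    show "vanishes_on C a b"
      unfolding vanishes_on_def
    proof
      fix c assume "c \<in> C"
      then consider "c \<in> del_neuron C n" | g where "g \<in> interval \<sigma> \<tau>" "c = insert n g"
        using C_eq by blast
      then show "\<not> (a \<subseteq> c \<and> b \<inter> c = {})"
        by cases (use van interval_sub assms(2) in \<open>auto simp: vanishes_on_def\<close>)
    qed
  qed
qed

lemma piercing_del_neuron_subset: "is_piercing C n k \<sigma> \<tau> \<Longrightarrow> del_neuron C n \<subseteq> C"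
  unfolding is_piercing_def by (metis Un_upper1)

lemma vanishes_on_Diff_neuron:
  assumes "del_neuron C n \<subseteq> C" "n \<notin> a" "vanishes_on C a b"
  shows "vanishes_on C a (b - {n})"
  unfolding vanishes_on_def
proof (intro ballI notI)
  fix c assume c: "c \<in> C" "a \<subseteq> c \<and> (b - {n}) \<inter> c = {}"
  then have "c - {n} \<in> C"
    using assms(1) unfolding del_neuron_def by blast
  moreover have "a \<subseteq> c - {n}" "b \<inter> (c - {n}) = {}"
    using c(2) assms(2) by blast+
  ultimately show False
    using assms(3) unfolding vanishes_on_def by blast
qed

lemma piercing_vanishes_on_iff_interval:
  assumes "is_piercing C n k \<sigma> \<tau>" "n \<in> a" "a \<inter> b = {}"
  shows "vanishes_on C a b \<longleftrightarrow> \<not> (a - {n} \<subseteq> \<tau> \<and> b \<inter> \<sigma> = {})"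
proof -
  have C_eq: "C = del_neuron C n \<union> insert n ` interval \<sigma> \<tau>" and "\<sigma> \<subseteq> \<tau>"
    using assms(1) unfolding is_piercing_def by blast+
  have "\<forall>d\<in>del_neuron C n. \<not> a \<subseteq> d"
    using assms(2) unfolding del_neuron_def by blast
  then have "(\<exists>c\<in>C. a \<subseteq> c \<and> b \<inter> c = {})
      \<longleftrightarrow> (\<exists>g\<in>interval \<sigma> \<tau>. a \<subseteq> insert n g \<and> b \<inter> insert n g = {})"
    by (subst C_eq) blast
  also have "\<dots> \<longleftrightarrow> a - {n} \<subseteq> \<tau> \<and> b \<inter> \<sigma> = {}"
  proof
    assume "\<exists>g\<in>interval \<sigma> \<tau>. a \<subseteq> insert n g \<and> b \<inter> insert n g = {}"
    then obtain g where "\<sigma> \<subseteq> g" "g \<subseteq> \<tau>" "a \<subseteq> insert n g" "b \<inter> insert n g = {}"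
      unfolding interval_def by blast
    then show "a - {n} \<subseteq> \<tau> \<and> b \<inter> \<sigma> = {}"
      by blast
  next
    assume "a - {n} \<subseteq> \<tau> \<and> b \<inter> \<sigma> = {}"
    then have "\<sigma> \<union> (a - {n}) \<in> interval \<sigma> \<tau>" "a \<subseteq> insert n (\<sigma> \<union> (a - {n}))"
      "b \<inter> insert n (\<sigma> \<union> (a - {n})) = {}"
      using assms(2,3) \<open>\<sigma> \<subseteq> \<tau>\<close> unfolding interval_def by blast+
    then show "\<exists>g\<in>interval \<sigma> \<tau>. a \<subseteq> insert n g \<and> b \<inter> insert n g = {}"
      by blast
  qed
  finally show ?thesis
    unfolding vanishes_on_def by blast
qed

lemma minimal_vanishing_notin_neg:
  assumes "del_neuron C n \<subseteq> C" "minimal_vanishing m C a b"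
  shows "n \<notin> b"
proof
  assume "n \<in> b"
  have "a \<inter> b = {}" "vanishes_on C a b"
    using assms(2) unfolding minimal_vanishing_def by blast+
  then have "vanishes_on C a (b - {n})"
    using vanishes_on_Diff_neuron[OF assms(1)] \<open>n \<in> b\<close> by blast
  then have "b - {n} = b"
    using assms(2) unfolding minimal_vanishing_def by blast
  with \<open>n \<in> b\<close> show False
    by blast
qed

lemma piercing_minimal_vanishing_iff_del_neuron:
  assumes piercing: "is_piercing C n k \<sigma> \<tau>" and "n \<notin> a" "n \<notin> b"
  shows "minimal_vanishing n C a b \<longleftrightarrow> minimal_vanishing (n-1) (del_neuron C n) a b"
proof -
  have "{1..n-1} = {1..n} - {n}"
    by auto
  then have range: "x \<subseteq> {1..n} \<longleftrightarrow> x \<subseteq> {1..n-1}" if "n \<notin> x" for x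
    using that by blast
  have "vanishes_on C a' b' \<longleftrightarrow> vanishes_on (del_neuron C n) a' b'" if "a' \<subseteq> a" for a' b'
    using piercing_vanishes_on_iff_del_neuron[OF piercing] that \<open>n \<notin> a\<close> by blast
  then show ?thesis
    unfolding minimal_vanishing_def using range[OF \<open>n \<notin> a\<close>] range[OF \<open>n \<notin> b\<close>]
    by (simp cong: imp_cong)
qed

lemma piercing_minimal_vanishing_with_neuron:
  assumes piercing: "is_piercing C n k \<sigma> \<tau>" and "minimal_vanishing n C a b" "n \<in> a"
  shows "(\<exists>i\<in>{1..n-1} - \<tau>. a = {n, i} \<and> b = {}) \<or> (\<exists>j\<in>\<sigma>. a = {n} \<and> b = {j})"
proof -
  have ab: "a \<subseteq> {1..n}" "a \<inter> b = {}" and van: "vanishes_on C a b"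
    using assms(2) unfolding minimal_vanishing_def by blast+
  have least: "a' = a \<and> b' = b" if "a' \<subseteq> a" "b' \<subseteq> b" "vanishes_on C a' b'" for a' b'
    using assms(2) that unfolding minimal_vanishing_def by blast
  consider i where "i \<in> a" "i \<noteq> n" "i \<notin> \<tau>" | j where "j \<in> b" "j \<in> \<sigma>"
    using van piercing_vanishes_on_iff_interval[OF piercing \<open>n \<in> a\<close> ab(2)] by blast
  then show ?thesis
  proof cases
    case (1 i)
    then have "\<not> {n, i} - {n} \<subseteq> \<tau>"
      by blast
    then have "vanishes_on C {n, i} {}"
      using piercing_vanishes_on_iff_interval[OF piercing, of "{n, i}" "{}"] by blast
    then have "a = {n, i} \<and> b = {}"
      using least[of "{n, i}" "{}"] 1 \<open>n \<in> a\<close> by blast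
    moreover have "i \<in> {1..n}"
      using 1 ab(1) by blast
    with 1 have "i \<in> {1..n-1} - \<tau>"
      by auto
    ultimately show ?thesis
      by blast
  next
    case (2 j)
    have "\<sigma> \<subseteq> {1..n-1}" "n \<notin> {1..n-1}"
      using piercing unfolding is_piercing_def by auto
    then have "j \<noteq> n"
      using 2 by blast
    then have "vanishes_on C {n} {j}"
      using piercing_vanishes_on_iff_interval[OF piercing, of "{n}" "{j}"] 2 by blast
    then have "a = {n} \<and> b = {j}"
      using least[of "{n}" "{j}"] 2 \<open>n \<in> a\<close> by blast
    then show ?thesis
      using 2 by blast
  qed
qed

lemma piercing_minimal_vanishing_outside_tau:
  assumes piercing: "is_piercing C n k \<sigma> \<tau>" and "n \<ge> 1"
    and i: "i \<in> {1..n-1} - \<tau>" "\<exists>c\<in>C. i \<in> c"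
  shows "minimal_vanishing n C {n, i} {}"
proof (rule minimal_vanishingI)
  have "i \<in> {1..n}" "i \<noteq> n" "i \<notin> \<tau>" "n \<in> {1..n}"
    using i(1) \<open>n \<ge> 1\<close> by auto
  then show "{n, i} \<subseteq> {1..n}" "{} \<subseteq> {1..n}" "{n, i} \<inter> {} = {}"
    and "vanishes_on C {n, i} {}"
    using piercing_vanishes_on_iff_interval[OF piercing, of "{n, i}" "{}"] by blast+
  fix a' b' assume sub: "a' \<subseteq> {n, i}" "b' \<subseteq> {}" and van: "vanishes_on C a' b'"
  have "\<not> vanishes_on C {n} {}"
    using piercing_vanishes_on_iff_interval[OF piercing, of "{n}" "{}"] by blast
  moreover have "\<not> vanishes_on C {i} {}"
    using i(2) unfolding vanishes_on_def by blast
  ultimately have "\<not> a' \<subseteq> {n}" "\<not> a' \<subseteq> {i}"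
    using vanishes_on_mono[OF van _ sub(2)] by blast+
  then show "a' = {n, i} \<and> b' = {}"
    using sub by blast
qed

lemma piercing_minimal_vanishing_in_sigma:
  assumes piercing: "is_piercing C n k \<sigma> \<tau>" and "n \<ge> 1"
    and j: "j \<in> \<sigma>" and "{} \<in> C"
  shows "minimal_vanishing n C {n} {j}"
proof (rule minimal_vanishingI)
  have "j \<in> {1..n-1}"
    using piercing j unfolding is_piercing_def by blast
  then show "{n} \<subseteq> {1..n}" "{j} \<subseteq> {1..n}" "{n} \<inter> {j} = {}"
    using \<open>n \<ge> 1\<close> by auto
  then show "vanishes_on C {n} {j}"
    using piercing_vanishes_on_iff_interval[OF piercing, of "{n}" "{j}"] j by blast
  fix a' b' assume sub: "a' \<subseteq> {n}" "b' \<subseteq> {j}" and van: "vanishes_on C a' b'"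
  have "\<not> vanishes_on C {n} {}"
    using piercing_vanishes_on_iff_interval[OF piercing, of "{n}" "{}"] by blast
  moreover have "\<not> vanishes_on C {} {j}"
    using \<open>{} \<in> C\<close> unfolding vanishes_on_def by blast
  ultimately have "b' \<noteq> {}" "a' \<noteq> {}"
    using vanishes_on_mono[OF van] sub by blast+
  then show "a' = {n} \<and> b' = {j}"
    using sub by auto
qed

lemma piercing_minimal_vanishing_iff:
  assumes "n \<ge> 1" "is_code n C" and piercing: "is_piercing C n k \<sigma> \<tau>"
  shows "minimal_vanishing n C a b \<longleftrightarrow> minimal_vanishing (n-1) (del_neuron C n) a b
    \<or> (\<exists>i\<in>{1..n-1} - \<tau>. a = {n, i} \<and> b = {}) \<or> (\<exists>j\<in>\<sigma>. a = {n} \<and> b = {j})"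
proof
  assume min: "minimal_vanishing n C a b"
  have "n \<notin> b"
    using minimal_vanishing_notin_neg[OF piercing_del_neuron_subset[OF piercing] min] .
  then show "minimal_vanishing (n-1) (del_neuron C n) a b
    \<or> (\<exists>i\<in>{1..n-1} - \<tau>. a = {n, i} \<and> b = {}) \<or> (\<exists>j\<in>\<sigma>. a = {n} \<and> b = {j})"
    using piercing_minimal_vanishing_with_neuron[OF piercing min]
      piercing_minimal_vanishing_iff_del_neuron[OF piercing _ \<open>n \<notin> b\<close>] min by blast
next
  have "{} \<in> C" and covered: "\<forall>i\<in>{1..n}. \<exists>c\<in>C. i \<in> c"
    using assms(2) unfolding is_code_def by blast+
  have "n \<notin> {1..n-1}" "{1..n-1} \<subseteq> {1..n}"
    by auto
  assume "minimal_vanishing (n-1) (del_neuron C n) a b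
    \<or> (\<exists>i\<in>{1..n-1} - \<tau>. a = {n, i} \<and> b = {}) \<or> (\<exists>j\<in>\<sigma>. a = {n} \<and> b = {j})"
  then show "minimal_vanishing n C a b"
  proof (elim disjE bexE conjE)
    assume min: "minimal_vanishing (n-1) (del_neuron C n) a b"
    then have "n \<notin> a" "n \<notin> b"
      using \<open>n \<notin> {1..n-1}\<close> unfolding minimal_vanishing_def by blast+
    with min show ?thesis
      using piercing_minimal_vanishing_iff_del_neuron[OF piercing] by blast
  next
    fix i assume "i \<in> {1..n-1} - \<tau>" "a = {n, i}" "b = {}"
    then show ?thesis
      using piercing_minimal_vanishing_outside_tau[OF piercing assms(1)] covered
        \<open>{1..n-1} \<subseteq> {1..n}\<close> by blast
  next
    fix j assume "j \<in> \<sigma>" "a = {n}" "b = {j}"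
    then show ?thesis
      using piercing_minimal_vanishing_in_sigma[OF piercing assms(1) _ \<open>{} \<in> C\<close>] by blast
  qed
qed

lemma CF_piercing:
  assumes "n \<ge> 1" "is_code n C" "is_piercing C n k \<sigma> \<tau>"
  shows "CF n C = CF (n-1) (del_neuron C n)
    \<union> (\<lambda>i. X n * X i) ` ({1..n-1} - \<tau>) \<union> (\<lambda>j. X n * (1 - X j)) ` \<sigma>"
proof -
  have C_Pow: "C \<subseteq> Pow {1..n}"
    using assms(2) unfolding is_code_def by blast
  then have D_Pow: "del_neuron C n \<subseteq> Pow {1..n-1}"
    by (rule del_neuron_subset_Pow)
  have "n \<notin> {1..n-1}"
    by auto
  then have pos: "(\<lambda>i. X n * X i) ` ({1..n-1} - \<tau>) = (\<lambda>i. pm {n, i} {}) ` ({1..n-1} - \<tau>)"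
    by (intro image_cong) (auto simp: pm_def)
  have neg: "(\<lambda>j. X n * (1 - X j)) ` \<sigma> = (\<lambda>j. pm {n} {j}) ` \<sigma>"
    by (simp add: pm_def)
  show ?thesis
  proof (rule set_eqI)
    fix f
    have "f \<in> CF n C \<longleftrightarrow> (\<exists>a b. f = pm a b \<and> minimal_vanishing n C a b)"
      by (rule CF_iff_minimal_vanishing[OF C_Pow])
    also have "\<dots> \<longleftrightarrow> (\<exists>a b. f = pm a b \<and> minimal_vanishing (n-1) (del_neuron C n) a b)
        \<or> (\<exists>i\<in>{1..n-1} - \<tau>. f = pm {n, i} {}) \<or> (\<exists>j\<in>\<sigma>. f = pm {n} {j})"
      unfolding piercing_minimal_vanishing_iff[OF assms] by blast
    also have "\<dots> \<longleftrightarrow> f \<in> CF (n-1) (del_neuron C n)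
        \<union> (\<lambda>i. X n * X i) ` ({1..n-1} - \<tau>) \<union> (\<lambda>j. X n * (1 - X j)) ` \<sigma>"
      unfolding pos neg Un_iff CF_iff_minimal_vanishing[OF D_Pow] by blast
    finally show "f \<in> CF n C \<longleftrightarrow> f \<in> CF (n-1) (del_neuron C n)
        \<union> (\<lambda>i. X n * X i) ` ({1..n-1} - \<tau>) \<union> (\<lambda>j. X n * (1 - X j)) ` \<sigma>" .
  qed
qed

theorem lemma2p2:
  fixes C :: "nat set set" and n k :: nat and \<sigma> \<tau> :: "nat set"
  assumes "n \<ge> 1"
    and "is_code n C"
    and "is_piercing C n k \<sigma> \<tau>"
  defines "A \<equiv> CF (n-1) (del_neuron C n)"
    and "B1 \<equiv> (\<lambda>i. X n * X i) ` ({1..n-1} - \<tau>)"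
    and "B2 \<equiv> (\<lambda>j. X n * (1 - X j)) ` \<sigma>"
  shows "CF n C = A \<union> B1 \<union> B2 \<and> A \<inter> B1 = {} \<and> A \<inter> B2 = {} \<and> B1 \<inter> B2 = {}"
proof -
  have "C \<subseteq> Pow {1..n}"
    using assms(2) unfolding is_code_def by blast
  then have D_Pow: "del_neuron C n \<subseteq> Pow {1..n-1}"
    by (rule del_neuron_subset_Pow)
  have "n \<notin> {1..n-1}"
    by auto
  have "\<sigma> \<subseteq> {1..n-1}"
    using assms(3) unfolding is_piercing_def by blast
  have "X n * X i \<noteq> X n * (1 - X j)" if "i \<in> {1..n-1} - \<tau>" "j \<in> \<sigma>" for i j
    using that \<open>n \<notin> {1..n-1}\<close> \<open>\<sigma> \<subseteq> {1..n-1}\<close>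
    by (intro X_mult_X_ne_X_mult_one_minus_X) blast+
  then have "B1 \<inter> B2 = {}"
    unfolding B1_def B2_def by blast
  moreover have "A \<inter> B1 = {}" "A \<inter> B2 = {}"
    unfolding A_def B1_def B2_def using CF_ne_X_mult[OF D_Pow _ \<open>n \<notin> {1..n-1}\<close>] by auto
  moreover have "CF n C = A \<union> B1 \<union> B2"
    unfolding A_def B1_def B2_def by (rule CF_piercing[OF assms(1-3)])
  ultimately show ?thesis
    by (intro conjI)
qed

end
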